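(* Let $k\geq 2$ be an integer and let $C_k(n)$ denote the number of closed words of length $n$ over the alphabet $\Sigma_k=\{0,1,\ldots,k-1\}$. (a) There exist constants $N>0$ and $c>0$ (depending on $k$) such that $C_k(n)\geq c\,\frac{k^n}{n}$ for all $n>N$. (b) There exist constants $N'>0$ and $c'>0$ (depending on $k$) such that $C_k(n)\leq c'\,\frac{k^n}{n}$ for all $n>N'$.
   Context: A word $u$ is a factor of a word $w$ if $w=xuy$ for some words $x,y$; occurrences of $u$ in $w$ are counted as factor positions (overlaps allowed). A border of a word $w$ is a non-empty word $u$ that is both a proper prefix and a proper suffix of $w$. A word $w$ is closed if $|w|\leq 1$ or if $w$ has a border that occurs exactly twice in $w$ (as a factor). *)

theory Defs
  imports Complex_Main "HOL-Library.Sublist"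
begin

definition occ_count :: "'a list \<Rightarrow> 'a list \<Rightarrow> nat" where
  "occ_count u w = card {i. i + length u \<le> length w \<and> take (length u) (drop i w) = u}"

definition is_border :: "'a list \<Rightarrow> 'a list \<Rightarrow> bool" where
  "is_border u w \<longleftrightarrow> u \<noteq> [] \<and> strict_prefix u w \<and> strict_suffix u w"

definition closed_word :: "'a list \<Rightarrow> bool" where
  "closed_word w \<longleftrightarrow> length w \<le> 1 \<or> (\<exists>u. is_border u w \<and> occ_count u w = 2)"

definition closed_count :: "nat \<Rightarrow> nat \<Rightarrow> nat" where
  "closed_count k n = card {w :: nat list. length w = n \<and> set w \<subseteq> {..<k} \<and> closed_word w}"

end

theory Submission
  imports Defs
begin

text \<open>
  A closed word of length \<open>n\<close> has a border \<open>u\<close> of some length \<open>m\<close> occurring only as its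
  prefix and its suffix.

  If \<open>k\<^sup>m \<ge> n\<close>, the border makes \<open>n - m\<close> a period, so there are at most
  \<open>k\<^bsup>n-m\<^esup>\<close> such words, and these sum to \<open>O(k\<^sup>n / n)\<close>.  If \<open>k\<^sup>m < n\<close>, the word is
  \<open>u v u\<close> with \<open>v\<close> avoiding \<open>u\<close>.  Extending a word avoiding \<open>u\<close> by \<open>u\<close> until \<open>u\<close> first
  appears shows that the density \<open>F\<close> of words avoiding \<open>u\<close> satisfies the renewal inequality
  \<open>F j \<le> \<Sum>s=1..m. k\<^sup>s (F (j+s-1) - F (j+s))\<close>, which forces \<open>F L = O(k\<^bsup>2m\<^esup> / L\<^sup>2)\<close>.
  This gives \<open>O(k\<^bsup>n+m\<^esup> / n\<^sup>2)\<close> words for each small \<open>m\<close>, again \<open>O(k\<^sup>n / n)\<close> in total.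

  Take \<open>m\<close> minimal with \<open>k\<^sup>m \<ge> 2n\<close> and count the \<open>k\<^bsup>n-m\<^esup>\<close> words \<open>u v u\<close>
  with \<open>|u| = m\<close>.  Such a word is closed unless \<open>u\<close> occurs at an inner position \<open>i\<close>, and then
  \<open>u\<close> is determined by \<open>v\<close> and \<open>i\<close>; so at most \<open>n k\<^bsup>n-2m\<^esup> \<le> k\<^bsup>n-m\<^esup> / 2\<close> of them are
  not closed, leaving at least \<open>k\<^bsup>n-m\<^esup> / 2 \<ge> k\<^sup>n / (4 k n)\<close> closed words.
\<close>

section \<open>Decay of renewal sequences\<close>

lemma sum_power_le_twice_top:
  fixes K :: real
  assumes "K \<ge> 2"
  shows "(\<Sum>s = 1..m. K ^ s) \<le> 2 * K ^ m"
proof (induction m)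
  case (Suc m)
  then have "(\<Sum>s = 1..Suc m. K ^ s) \<le> 2 * K ^ m + K ^ Suc m" by simp
  also have "\<dots> \<le> 2 * K ^ Suc m" using assms by simp
  finally show ?case .
qed simp

text \<open>Summing the renewal inequality over the \<open>m\<close> starting points \<open>L, \<dots>, L + m - 1\<close>,
  each inner sum telescopes to at most \<open>F L - F (L + 2 * m)\<close>.\<close>
lemma renewal_decay_step:
  fixes F :: "nat \<Rightarrow> real" and K :: real
  assumes K: "K \<ge> 2" and dec: "decseq F"
    and renewal: "\<And>j. F j \<le> (\<Sum>s = 1..m. K ^ s * (F (j + s - 1) - F (j + s)))"
  shows "(1 + m / (2 * K ^ m)) * F (L + 2 * m) \<le> F L"
proof -
  have F_anti: "F j \<le> F i" if "i \<le> j" for i j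
    using dec that by (simp add: decseq_def)
  have telescope: "(\<Sum>i<m. F (L + i + s - 1) - F (L + i + s)) \<le> F L - F (L + 2 * m)"
    if s: "s \<in> {1..m}" for s
  proof -
    have "(\<Sum>i<m. F (L + i + s - 1) - F (L + i + s)) = F (L + s - 1) - F (L + s - 1 + m)"
      using s sum_lessThan_telescope'[of "\<lambda>i. F (L + s - 1 + i)" m]
      by (simp add: algebra_simps)
    also have "\<dots> \<le> F L - F (L + 2 * m)"
    proof -
      have "F (L + s - 1) \<le> F L" using s by (intro F_anti) auto
      moreover have "F (L + 2 * m) \<le> F (L + s - 1 + m)" using s by (intro F_anti) auto
      ultimately show ?thesis by linarith
    qed
    finally show ?thesis .
  qed
  have "m * F (L + 2 * m) \<le> (\<Sum>i<m. F (L + i))"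
    using sum_mono[of "{..<m}" "\<lambda>_. F (L + 2 * m)" "\<lambda>i. F (L + i)"] F_anti by simp
  also have "\<dots> \<le> (\<Sum>i<m. \<Sum>s = 1..m. K ^ s * (F (L + i + s - 1) - F (L + i + s)))"
    using renewal[of "L + _"] by (intro sum_mono) (simp add: add.assoc)
  also have "\<dots> = (\<Sum>s = 1..m. K ^ s * (\<Sum>i<m. F (L + i + s - 1) - F (L + i + s)))"
    by (subst sum.swap) (simp add: sum_distrib_left)
  also have "\<dots> \<le> (\<Sum>s = 1..m. K ^ s) * (F L - F (L + 2 * m))"
    unfolding sum_distrib_right using K telescope by (intro sum_mono mult_left_mono) auto
  also have "\<dots> \<le> 2 * K ^ m * (F L - F (L + 2 * m))"
    using sum_power_le_twice_top[OF K] F_anti[of L "L + 2 * m"] by (intro mult_right_mono) auto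
  finally have "m * F (L + 2 * m) \<le> 2 * K ^ m * (F L - F (L + 2 * m))" .
  moreover have "2 * K ^ m > 0" using K by simp
  ultimately have "m * F (L + 2 * m) / (2 * K ^ m) \<le> F L - F (L + 2 * m)"
    by (simp add: pos_divide_le_eq mult.commute)
  moreover have "(1 + m / (2 * K ^ m)) * F (L + 2 * m) = F (L + 2 * m) + m * F (L + 2 * m) / (2 * K ^ m)"
    by (simp add: ring_distribs)
  ultimately show ?thesis by linarith
qed

lemma decay_iterate:
  fixes F :: "nat \<Rightarrow> real" and a :: real
  assumes "a \<ge> 0" and "\<And>j. (1 + a) * F (j + d) \<le> F j"
  shows "F (d * t) \<le> F 0 / (1 + a) ^ t"
proof (induction t)
  case (Suc t)
  have "F (d * Suc t) \<le> F (d * t) / (1 + a)"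
    using assms(1) assms(2)[of "d * t"] by (simp add: field_simps add.commute)
  also have "\<dots> \<le> F 0 / (1 + a) ^ t / (1 + a)"
    by (rule divide_right_mono) (use Suc assms(1) in auto)
  also have "\<dots> = F 0 / (1 + a) ^ Suc t"
    by (simp add: mult.commute)
  finally show ?case .
qed simp

lemma inverse_power_le_inverse_square:
  fixes a :: real
  assumes "a > 0" and "t \<ge> 1"
  shows "1 / (1 + a) ^ (2 * t) \<le> 1 / (t * a)\<^sup>2"
proof -
  have "t * a \<le> (1 + a) ^ t"
    using Bernoulli_inequality[of a t] assms by simp
  then have "(t * a)\<^sup>2 \<le> (1 + a) ^ (2 * t)"
    using assms by (simp add: power_mono power_mult mult.commute)
  then show ?thesis using assms by (simp add: frac_le)
qed

lemma renewal_decay: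
  fixes F :: "nat \<Rightarrow> real" and K :: real
  assumes K: "K \<ge> 2" and m: "m \<ge> 1" and dec: "decseq F" and nonneg: "\<And>j. F j \<ge> 0"
    and renewal: "\<And>j. F j \<le> (\<Sum>s = 1..m. K ^ s * (F (j + s - 1) - F (j + s)))"
    and t: "t \<ge> 1" and L: "4 * m * t \<le> L"
  shows "F L \<le> 4 * K ^ (2 * m) * F 0 / (t * m)\<^sup>2"
proof -
  define a where "a = m / (2 * K ^ m)"
  have a: "a > 0" using K m by (simp add: a_def)
  have "F L \<le> F (2 * m * (2 * t))"
    using dec L by (simp add: decseq_def algebra_simps)
  also have "\<dots> \<le> F 0 / (1 + a) ^ (2 * t)"
    using renewal_decay_step[OF K dec renewal] a
    by (intro decay_iterate) (auto simp: a_def add.commute)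
  also have "\<dots> \<le> F 0 / (t * a)\<^sup>2"
    using inverse_power_le_inverse_square[OF a t] nonneg[of 0]
    by (metis mult_left_mono times_divide_eq_right mult_1_right)
  also have "\<dots> = 4 * K ^ (2 * m) * F 0 / (t * m)\<^sup>2"
    using K by (simp add: a_def power_mult_distrib power_mult[symmetric] field_simps)
  finally show ?thesis .
qed

section \<open>Words avoiding a factor\<close>

definition words :: "'a set \<Rightarrow> nat \<Rightarrow> 'a list set" where
  "words A n = {w. length w = n \<and> set w \<subseteq> A}"

definition avoiding :: "'a set \<Rightarrow> 'a list \<Rightarrow> nat \<Rightarrow> 'a list set" where
  "avoiding A u n = {w \<in> words A n. \<not> sublist u w}"

definition minimal_containing :: "'a set \<Rightarrow> 'a list \<Rightarrow> nat \<Rightarrow> 'a list set" where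
  "minimal_containing A u n = {w \<in> words A n. sublist u w \<and> \<not> sublist u (butlast w)}"

lemma finite_words [simp]: "finite A \<Longrightarrow> finite (words A n)"
  using finite_lists_length_eq[of A n] by (simp add: words_def conj_commute)

lemma card_words [simp]: "finite A \<Longrightarrow> card (words A n) = card A ^ n"
  using card_lists_length_eq[of A n] by (simp add: words_def conj_commute)

lemma finite_avoiding [simp]: "finite A \<Longrightarrow> finite (avoiding A u n)"
  by (simp add: avoiding_def)

lemma finite_minimal_containing [simp]: "finite A \<Longrightarrow> finite (minimal_containing A u n)"
  by (simp add: minimal_containing_def)

lemma card_avoiding_Suc_add_card_minimal_containing:
  assumes "finite A"
  shows "card (avoiding A u (Suc n)) + card (minimal_containing A u (Suc n))
           \<le> card A * card (avoiding A u n)"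
proof -
  let ?snoc = "\<lambda>(x, a). x @ [a]"
  have "avoiding A u (Suc n) \<union> minimal_containing A u (Suc n) \<subseteq> ?snoc ` (avoiding A u n \<times> A)"
  proof
    fix w assume w: "w \<in> avoiding A u (Suc n) \<union> minimal_containing A u (Suc n)"
    then have len: "length w = Suc n" and set: "set w \<subseteq> A"
      by (auto simp: avoiding_def minimal_containing_def words_def)
    then have "w \<noteq> []" by auto
    have "\<not> sublist u (butlast w)"
      using w sublist_order.order.trans[OF _ sublist_butlast[of w]]
      by (auto simp: avoiding_def minimal_containing_def)
    then have "butlast w \<in> avoiding A u n"
      using len set by (auto simp: avoiding_def words_def dest: in_set_butlastD)
    moreover have "last w \<in> A" using set \<open>w \<noteq> []\<close> by auto
    moreover have "w = butlast w @ [last w]" using \<open>w \<noteq> []\<close> by simp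
    ultimately show "w \<in> ?snoc ` (avoiding A u n \<times> A)" by force
  qed
  moreover have "avoiding A u (Suc n) \<inter> minimal_containing A u (Suc n) = {}"
    by (auto simp: avoiding_def minimal_containing_def)
  ultimately have "card (avoiding A u (Suc n)) + card (minimal_containing A u (Suc n))
                     \<le> card (?snoc ` (avoiding A u n \<times> A))"
    using assms by (simp add: card_Un_disjoint[symmetric] card_mono)
  also have "\<dots> \<le> card (avoiding A u n \<times> A)"
    by (rule card_image_le) (simp add: assms)
  finally show ?thesis by (simp add: card_cartesian_product mult.commute)
qed

text \<open>A word \<open>x\<close> avoiding \<open>u\<close> is recovered from the shortest prefix of \<open>x @ u\<close> containing
  \<open>u\<close>, whose length is \<open>length x + s\<close> with \<open>1 \<le> s \<le> length u\<close>.\<close>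
lemma card_avoiding_le_sum_minimal_containing:
  assumes "finite A" and "set u \<subseteq> A"
  shows "card (avoiding A u n) \<le> (\<Sum>s = 1..length u. card (minimal_containing A u (n + s)))"
proof -
  define f where "f x = take (LEAST e. sublist u (take e (x @ u))) (x @ u)" for x
  have f: "f x \<in> (\<Union>s \<in> {1..length u}. minimal_containing A u (n + s)) \<and> take n (f x) = x"
    if x: "x \<in> avoiding A u n" for x
  proof -
    define e where "e = (LEAST e. sublist u (take e (x @ u)))"
    have len: "length x = n" and set: "set x \<subseteq> A" and avoid: "\<not> sublist u x"
      using x by (auto simp: avoiding_def words_def)
    have "sublist u (take (n + length u) (x @ u))" using len by simp
    then have e_le: "e \<le> n + length u" and contains: "sublist u (take e (x @ u))"
      unfolding e_def by (auto intro: Least_le LeastI)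
    have e_gt: "n < e"
    proof (rule ccontr)
      assume "\<not> n < e"
      then have "sublist u (take e x)" using contains len by simp
      then show False using avoid sublist_order.order.trans[OF _ sublist_take] by blast
    qed
    have "butlast (take e (x @ u)) = take (e - 1) (x @ u)"
      using e_le len by (subst butlast_take) auto
    then have "\<not> sublist u (butlast (take e (x @ u)))"
      using e_gt not_less_Least[of "e - 1" "\<lambda>e. sublist u (take e (x @ u))"] by (simp add: e_def)
    moreover have "take e (x @ u) \<in> words A (n + (e - n))"
      using e_le e_gt len set assms(2) by (auto simp: words_def dest: in_set_takeD)
    ultimately have "take e (x @ u) \<in> minimal_containing A u (n + (e - n))"
      using contains by (simp add: minimal_containing_def)
    moreover have "e - n \<in> {1..length u}" using e_gt e_le by auto
    moreover have "take n (take e (x @ u)) = x" using e_gt len by simp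
    ultimately show ?thesis unfolding f_def e_def[symmetric] by blast
  qed
  have "inj_on f (avoiding A u n)" by (rule inj_onI) (metis f)
  then have "card (avoiding A u n) = card (f ` avoiding A u n)" by (simp add: card_image)
  also have "\<dots> \<le> card (\<Union>s \<in> {1..length u}. minimal_containing A u (n + s))"
    using f assms(1) by (intro card_mono) auto
  also have "\<dots> \<le> (\<Sum>s = 1..length u. card (minimal_containing A u (n + s)))"
    by (rule card_UN_le) simp
  finally show ?thesis .
qed

definition avoiding_density :: "'a set \<Rightarrow> 'a list \<Rightarrow> nat \<Rightarrow> real" where
  "avoiding_density A u n = card (avoiding A u n) / card A ^ n"

lemma avoiding_density_nonneg: "0 \<le> avoiding_density A u n"
  by (simp add: avoiding_density_def)

lemma card_minimal_containing_le_density_diff: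
  assumes "finite A" and "A \<noteq> {}"
  shows "card (minimal_containing A u (Suc n)) / real (card A) ^ Suc n
           \<le> avoiding_density A u n - avoiding_density A u (Suc n)"
proof -
  have "real (card (avoiding A u (Suc n))) + card (minimal_containing A u (Suc n))
          \<le> card A * card (avoiding A u n)"
    using card_avoiding_Suc_add_card_minimal_containing[OF assms(1), of u n] by linarith
  moreover have "real (card A) > 0" using assms by (simp add: card_gt_0_iff)
  ultimately show ?thesis by (simp add: avoiding_density_def field_simps)
qed

lemma decseq_avoiding_density:
  assumes "finite A" and "A \<noteq> {}"
  shows "decseq (avoiding_density A u)"
proof (rule decseq_SucI)
  fix n
  have "0 \<le> card (minimal_containing A u (Suc n)) / real (card A) ^ Suc n" by simp
  then show "avoiding_density A u (Suc n) \<le> avoiding_density A u n"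
    using card_minimal_containing_le_density_diff[OF assms, of u n] by linarith
qed

lemma avoiding_density_renewal:
  assumes "finite A" and "A \<noteq> {}" and "set u \<subseteq> A"
  shows "avoiding_density A u n
           \<le> (\<Sum>s = 1..length u. real (card A) ^ s
                 * (avoiding_density A u (n + s - 1) - avoiding_density A u (n + s)))"
proof -
  let ?K = "real (card A)"
  have K: "?K > 0" using assms by (simp add: card_gt_0_iff)
  have "avoiding_density A u n
          \<le> (\<Sum>s = 1..length u. card (minimal_containing A u (n + s))) / ?K ^ n"
    using card_avoiding_le_sum_minimal_containing[OF assms(1,3), of n] K
    by (simp add: avoiding_density_def divide_right_mono flip: of_nat_sum)
  also have "\<dots> = (\<Sum>s = 1..length u. ?K ^ s * (card (minimal_containing A u (n + s)) / ?K ^ (n + s)))"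
    using K by (auto simp: sum_divide_distrib power_add intro!: sum.cong)
  also have "\<dots> \<le> (\<Sum>s = 1..length u. ?K ^ s
                     * (avoiding_density A u (n + s - 1) - avoiding_density A u (n + s)))"
  proof (intro sum_mono mult_left_mono)
    fix s assume "s \<in> {1..length u}"
    then have "Suc (n + s - 1) = n + s" by simp
    then show "card (minimal_containing A u (n + s)) / ?K ^ (n + s)
                 \<le> avoiding_density A u (n + s - 1) - avoiding_density A u (n + s)"
      using card_minimal_containing_le_density_diff[OF assms(1,2), of u "n + s - 1"] by simp
  qed simp
  finally show ?thesis .
qed

lemma card_avoiding_le:
  assumes A: "finite A" "card A \<ge> 2" and u: "set u \<subseteq> A" "u \<noteq> []"
    and t: "t \<ge> 1" and L: "4 * length u * t \<le> L"
  shows "card (avoiding A u L) \<le> 4 * real (card A) ^ (L + 2 * length u) / (t * length u)\<^sup>2"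
proof -
  let ?K = "real (card A)"
  have "A \<noteq> {}" using A by auto
  have "avoiding A u 0 = {[]}" using u(2) by (auto simp: avoiding_def words_def)
  then have "avoiding_density A u 0 = 1" by (simp add: avoiding_density_def)
  moreover have "avoiding_density A u L
      \<le> 4 * ?K ^ (2 * length u) * avoiding_density A u 0 / (t * length u)\<^sup>2"
    using A u \<open>A \<noteq> {}\<close>
    by (intro renewal_decay[OF _ _ _ _ _ t L] decseq_avoiding_density avoiding_density_nonneg
        avoiding_density_renewal) (auto simp: Suc_le_eq)
  moreover have "?K ^ L > 0" using \<open>A \<noteq> {}\<close> A by (simp add: card_gt_0_iff)
  ultimately have "card (avoiding A u L) \<le> 4 * ?K ^ (2 * length u) / (t * length u)\<^sup>2 * ?K ^ L"
    by (simp add: avoiding_density_def pos_divide_le_eq)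
  also have "\<dots> = 4 * ?K ^ (L + 2 * length u) / (t * length u)\<^sup>2"
    by (simp add: power_add times_divide_eq_left mult_ac)
  finally show ?thesis .
qed

section \<open>Occurrences, borders and periods\<close>

definition occurrences :: "'a list \<Rightarrow> 'a list \<Rightarrow> nat set" where
  "occurrences u w = {i. i + length u \<le> length w \<and> take (length u) (drop i w) = u}"

lemma occ_count_eq_card_occurrences: "occ_count u w = card (occurrences u w)"
  by (simp add: occ_count_def occurrences_def)

lemma finite_occurrences [simp]: "finite (occurrences u w)"
  by (rule finite_subset[of _ "{..length w}"]) (auto simp: occurrences_def)

lemma nth_eq_nth_of_occurrence:
  assumes "i \<in> occurrences u w" and "j < length u"
  shows "u ! j = w ! (i + j)"
proof -
  have occ: "i + length u \<le> length w" "take (length u) (drop i w) = u"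
    using assms(1) by (simp_all add: occurrences_def)
  then have "u ! j = drop i w ! j" using assms(2) by (metis nth_take)
  also have "\<dots> = w ! (i + j)" using occ(1) by (intro nth_drop) simp
  finally show ?thesis .
qed

lemma is_border_takeD:
  assumes "is_border (take m w) w"
  shows "0 < m" and "m < length w" and "take m w = drop (length w - m) w"
proof -
  show "0 < m" and "m < length w"
    using assms by (auto simp: is_border_def strict_prefix_def)
  have "suffix (take m w) w" using assms by (auto simp: is_border_def strict_suffix_def)
  then obtain x where w: "w = x @ take m w" by (auto simp: suffix_def)
  have "length w = length x + m" using \<open>m < length w\<close> by (subst (1) w) simp
  moreover have "take m w = drop (length x) w"
    using append_eq_conv_conj[of x "take m w" w] w[symmetric] by blast
  ultimately show "take m w = drop (length w - m) w" by simp
qed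

lemma nth_mod_period:
  assumes "0 < p" and "take (length w - p) w = drop p w" and "i < length w"
  shows "w ! i = w ! (i mod p)"
  using assms(3)
proof (induction i rule: less_induct)
  case (less i)
  show ?case
  proof (cases "i < p")
    case False
    then have "w ! i = drop p w ! (i - p)" using less.prems by simp
    also have "\<dots> = take (length w - p) w ! (i - p)" using assms(2) by simp
    also have "\<dots> = w ! (i - p)" using False less.prems by simp
    also have "\<dots> = w ! (i mod p)"
      using less.IH[of "i - p"] assms(1) False less.prems by (simp add: le_mod_geq)
    finally show ?thesis .
  qed simp
qed

lemma periodic_eqI:
  assumes "length w = length w'" and "0 < p"
    and "take (length w - p) w = drop p w" and "take (length w' - p) w' = drop p w'"
    and "take p w = take p w'"
  shows "w = w'"
proof (rule nth_equalityI)
  fix i assume i: "i < length w"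
  have "take p w ! (i mod p) = take p w' ! (i mod p)" using assms(5) by simp
  then show "w ! i = w' ! i"
    using nth_mod_period[OF assms(2,3) i] nth_mod_period[OF assms(2,4)] assms(1,2) i
    by (simp add: nth_take)
qed (fact assms(1))

lemma border_decomposition:
  assumes "is_border (take m w) w" and "2 * m \<le> length w"
  shows "w = take m w @ take (length w - 2 * m) (drop m w) @ take m w"
proof -
  have "drop (length w - 2 * m) (drop m w) = take m w"
    using is_border_takeD(3)[OF assms(1)] assms(2) by (simp add: add.commute)
  then have "drop m w = take (length w - 2 * m) (drop m w) @ take m w"
    by (metis append_take_drop_id)
  then show ?thesis by (metis append_take_drop_id)
qed

lemma not_sublist_if_occ_count_eq_2:
  assumes "u \<noteq> []" and "occ_count u (u @ v @ u) = 2"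
  shows "\<not> sublist u v"
proof
  assume "sublist u v"
  then obtain p q where v: "v = p @ u @ q" by (auto simp: sublist_def)
  then have "{0, length u + length p, length u + length v} \<subseteq> occurrences u (u @ v @ u)"
    by (auto simp: occurrences_def)
  moreover have "card {0, length u + length p, length u + length v} = 3"
    using assms(1) v by auto
  ultimately have "3 \<le> occ_count u (u @ v @ u)"
    by (metis card_mono finite_occurrences occ_count_eq_card_occurrences)
  with assms(2) show False by simp
qed

section \<open>Upper bound\<close>

definition closed_words :: "'a set \<Rightarrow> nat \<Rightarrow> 'a list set" where
  "closed_words A n = {w \<in> words A n. closed_word w}"

lemma closed_count_eq_card_closed_words: "closed_count k n = card (closed_words {..<k} n)"
  unfolding closed_count_def closed_words_def words_def by (rule arg_cong[where f = card]) auto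

lemma finite_closed_words [simp]: "finite A \<Longrightarrow> finite (closed_words A n)"
  by (simp add: closed_words_def)

definition closed_with_border :: "'a set \<Rightarrow> nat \<Rightarrow> nat \<Rightarrow> 'a list set" where
  "closed_with_border A n m =
     {w \<in> words A n. is_border (take m w) w \<and> occ_count (take m w) w = 2}"

lemma finite_closed_with_border [simp]: "finite A \<Longrightarrow> finite (closed_with_border A n m)"
  by (simp add: closed_with_border_def)

lemma closed_words_subset_closed_with_border:
  assumes "n \<ge> 2"
  shows "closed_words A n \<subseteq> (\<Union>m \<in> {1..<n}. closed_with_border A n m)"
proof
  fix w assume w: "w \<in> closed_words A n"
  then obtain u where u: "is_border u w" "occ_count u w = 2"
    using assms by (auto simp: closed_words_def words_def closed_word_def)
  then have "u = take (length u) w"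
    by (auto simp: is_border_def strict_prefix_def prefix_def)
  with u w have "w \<in> closed_with_border A n (length u)"
    by (simp add: closed_words_def closed_with_border_def)
  moreover have "length u \<in> {1..<n}"
    using is_border_takeD(1,2)[of "length u" w] u \<open>u = take (length u) w\<close> w
    by (auto simp: closed_words_def words_def Suc_le_eq)
  ultimately show "w \<in> (\<Union>m \<in> {1..<n}. closed_with_border A n m)" by blast
qed

lemma card_closed_with_border_le:
  assumes "finite A"
  shows "card (closed_with_border A n m) \<le> card A ^ (n - m)"
proof -
  have "inj_on (take (n - m)) (closed_with_border A n m)"
  proof (rule inj_onI)
    fix w w' assume w: "w \<in> closed_with_border A n m" and w': "w' \<in> closed_with_border A n m"
      and eq: "take (n - m) w = take (n - m) w'"
    from w w' have len: "length w = n" "length w' = n"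
      and border: "is_border (take m w) w" "is_border (take m w') w'"
      by (auto simp: closed_with_border_def words_def)
    show "w = w'"
    proof (rule periodic_eqI[of w w' "n - m"])
      show "0 < n - m" using is_border_takeD(2)[OF border(1)] len by simp
      show "take (length w - (n - m)) w = drop (n - m) w"
        using is_border_takeD(2,3)[OF border(1)] len by simp
      show "take (length w' - (n - m)) w' = drop (n - m) w'"
        using is_border_takeD(2,3)[OF border(2)] len by simp
    qed (use len eq in simp_all)
  qed
  moreover have "take (n - m) ` closed_with_border A n m \<subseteq> words A (n - m)"
    by (auto simp: closed_with_border_def words_def dest: in_set_takeD)
  ultimately show ?thesis
    using assms by (metis card_image card_mono card_words finite_words)
qed

lemma closed_with_border_subset_pairs:
  assumes "2 * m \<le> n"
  shows "closed_with_border A n m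
           \<subseteq> (\<lambda>(u, v). u @ v @ u) ` (SIGMA u:words A m. avoiding A u (n - 2 * m))"
proof
  fix w assume w: "w \<in> closed_with_border A n m"
  define u where "u = take m w"
  define v where "v = take (n - 2 * m) (drop m w)"
  have len: "length w = n" and set: "set w \<subseteq> A" and border: "is_border u w"
    and occ: "occ_count u w = 2"
    using w by (auto simp: closed_with_border_def words_def u_def)
  have w_eq: "w = u @ v @ u"
    using border_decomposition[of m w] border assms len by (simp add: u_def v_def)
  have "u \<noteq> []" using border by (simp add: is_border_def)
  then have "\<not> sublist u v" using not_sublist_if_occ_count_eq_2 occ w_eq by metis
  moreover have "u \<in> words A m" "v \<in> words A (n - 2 * m)"
    using len set assms by (auto simp: u_def v_def words_def dest: in_set_takeD in_set_dropD)
  ultimately show "w \<in> (\<lambda>(u, v). u @ v @ u) ` (SIGMA u:words A m. avoiding A u (n - 2 * m))"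
    using w_eq by (force simp: avoiding_def)
qed

lemma card_closed_with_border_le_sum_avoiding:
  assumes "finite A" and "2 * m \<le> n"
  shows "card (closed_with_border A n m) \<le> (\<Sum>u \<in> words A m. card (avoiding A u (n - 2 * m)))"
proof -
  have "card (closed_with_border A n m)
          \<le> card ((\<lambda>(u, v). u @ v @ u) ` (SIGMA u:words A m. avoiding A u (n - 2 * m)))"
    using assms by (intro card_mono closed_with_border_subset_pairs) auto
  also have "\<dots> \<le> card (SIGMA u:words A m. avoiding A u (n - 2 * m))"
    using assms by (intro card_image_le) auto
  also have "\<dots> = (\<Sum>u \<in> words A m. card (avoiding A u (n - 2 * m)))"
    using assms by (intro card_SigmaI) auto
  finally show ?thesis .
qed

lemma card_closed_with_short_border:
  assumes A: "finite A" "card A \<ge> 2" and m: "m \<ge> 1" and n: "12 * m \<le> n"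
  shows "card (closed_with_border A n m) \<le> 256 * real (card A) ^ (n + m) / (real n)\<^sup>2"
proof -
  let ?K = "real (card A)"
  define L where "L = n - 2 * m"
  define t where "t = L div (4 * m)"
  have "1 \<le> t" using m n by (simp add: t_def L_def Suc_le_eq div_greater_zero_iff)
  have L_le: "4 * m * t \<le> L" by (simp add: t_def mult.commute)
  have "L = 4 * (t * m) + L mod (4 * m)"
    using div_mult_mod_eq[of L "4 * m"] by (simp add: t_def ac_simps)
  moreover have "L mod (4 * m) < 4 * m" using m by simp
  ultimately have "n \<le> 8 * (t * m)" using n by (simp add: L_def)
  then have "real n / 8 \<le> real (t * m)" by linarith
  then have n_le: "(real n)\<^sup>2 / 64 \<le> real ((t * m)\<^sup>2)"
    using power_mono[of "real n / 8" "real (t * m)" 2] by (simp add: power_divide)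
  have "card (closed_with_border A n m) \<le> (\<Sum>u \<in> words A m. real (card (avoiding A u L)))"
    using card_closed_with_border_le_sum_avoiding[OF A(1), of m n] n
    by (simp add: L_def flip: of_nat_sum)
  also have "\<dots> \<le> (\<Sum>u \<in> words A m. 4 * ?K ^ (L + 2 * m) / (t * m)\<^sup>2)"
  proof (rule sum_mono)
    fix u assume "u \<in> words A m"
    then show "card (avoiding A u L) \<le> 4 * ?K ^ (L + 2 * m) / (t * m)\<^sup>2"
      using card_avoiding_le[of A u t L] A m \<open>1 \<le> t\<close> L_le by (auto simp: words_def Suc_le_eq)
  qed
  also have "\<dots> = 4 * ?K ^ (n + m) / (t * m)\<^sup>2"
    using A n by (simp add: L_def power_add[symmetric] times_divide_eq_right)
  also have "\<dots> \<le> 4 * ?K ^ (n + m) / ((real n)\<^sup>2 / 64)"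
    using n_le m n \<open>1 \<le> t\<close> by (intro divide_left_mono) auto
  also have "\<dots> = 256 * ?K ^ (n + m) / (real n)\<^sup>2" by simp
  finally show ?thesis .
qed

lemma twelve_mult_le_two_power: "7 \<le> m \<Longrightarrow> 12 * m \<le> (2::nat) ^ m"
  by (induction m rule: dec_induct) auto

lemma sum_card_closed_with_short_border:
  assumes A: "finite A" "card A \<ge> 2" and M: "card A ^ (M - 1) < n" and n: "n \<ge> 100"
  shows "(\<Sum>m \<in> {1..<M}. real (card (closed_with_border A n m))) \<le> 512 * real (card A) ^ n / n"
proof -
  let ?K = "real (card A)"
  have short: "12 * m \<le> n" if "m \<in> {1..<M}" for m
  proof -
    have "2 ^ m \<le> card A ^ m" using A by (simp add: power_mono)
    also have "\<dots> \<le> card A ^ (M - 1)" using A that by (intro power_increasing) auto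
    finally have "2 ^ m < n" using M by linarith
    then show ?thesis using twelve_mult_le_two_power[of m] n by (cases "7 \<le> m") auto
  qed
  have "(\<Sum>m \<in> {1..<M}. real (card (closed_with_border A n m)))
          \<le> (\<Sum>m \<in> {1..<M}. 256 * ?K ^ (n + m) / (real n)\<^sup>2)"
    using A short by (intro sum_mono card_closed_with_short_border) auto
  also have "\<dots> = 256 * ?K ^ n / (real n)\<^sup>2 * (\<Sum>m = 1..M - 1. ?K ^ m)"
  proof -
    have "{1..<M} = {1..M - 1}" by auto
    then show ?thesis by (simp add: sum_distrib_left power_add mult.assoc)
  qed
  also have "\<dots> \<le> 256 * ?K ^ n / (real n)\<^sup>2 * (2 * real n)"
  proof (intro mult_left_mono)
    have "(\<Sum>m = 1..M - 1. ?K ^ m) \<le> 2 * ?K ^ (M - 1)"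
      using A by (intro sum_power_le_twice_top) simp
    also have "\<dots> \<le> 2 * real n" using M by (simp flip: of_nat_power)
    finally show "(\<Sum>m = 1..M - 1. ?K ^ m) \<le> 2 * real n" .
  qed simp
  also have "\<dots> = 512 * ?K ^ n / n" using n by (simp add: power2_eq_square)
  finally show ?thesis .
qed

lemma sum_card_closed_with_long_border:
  assumes A: "finite A" "card A \<ge> 2" and M: "0 < M" "M \<le> n" "n \<le> card A ^ M"
  shows "(\<Sum>m \<in> {M..<n}. real (card (closed_with_border A n m))) \<le> 2 * real (card A) ^ n / n"
proof -
  let ?K = "real (card A)"
  have "(\<Sum>m \<in> {M..<n}. real (card (closed_with_border A n m))) \<le> (\<Sum>m \<in> {M..<n}. ?K ^ (n - m))"
    using card_closed_with_border_le[OF A(1)] by (intro sum_mono) (simp flip: of_nat_power)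
  also have "\<dots> = (\<Sum>s = 1..n - M. ?K ^ s)"
    by (rule sum.reindex_bij_witness[of _ "\<lambda>s. n - s" "\<lambda>m. n - m"]) auto
  also have "\<dots> \<le> 2 * ?K ^ (n - M)"
    using A by (intro sum_power_le_twice_top) simp
  also have "\<dots> \<le> 2 * ?K ^ n / n"
  proof -
    have "real n * ?K ^ (n - M) \<le> ?K ^ M * ?K ^ (n - M)"
      using M by (intro mult_right_mono) (simp_all flip: of_nat_power)
    also have "\<dots> = ?K ^ n" using M by (simp flip: power_add)
    finally show ?thesis using M by (simp add: field_simps)
  qed
  finally show ?thesis .
qed

lemma card_closed_words_upper:
  assumes A: "finite A" "card A \<ge> 2" and n: "n \<ge> 100"
  shows "card (closed_words A n) \<le> 514 * real (card A) ^ n / n"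
proof -
  obtain M where M: "card A ^ M < n" "n \<le> card A ^ (M + 1)"
    using ex_power_ivl2[OF A(2), of n] n by auto
  have "M < 2 ^ M" by (rule less_exp)
  also have "\<dots> \<le> card A ^ M" using A by (simp add: power_mono)
  finally have "M + 1 \<le> n" using M by linarith
  have "card (closed_words A n) \<le> card (\<Union>m \<in> {1..<n}. closed_with_border A n m)"
    using A n by (intro card_mono closed_words_subset_closed_with_border) auto
  also have "\<dots> \<le> (\<Sum>m \<in> {1..<n}. card (closed_with_border A n m))"
    by (rule card_UN_le) simp
  finally have "card (closed_words A n) \<le> (\<Sum>m \<in> {1..<n}. real (card (closed_with_border A n m)))"
    by (simp flip: of_nat_sum)
  also have "\<dots> = (\<Sum>m \<in> {1..<M + 1}. real (card (closed_with_border A n m)))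
                  + (\<Sum>m \<in> {M + 1..<n}. real (card (closed_with_border A n m)))"
    using \<open>M + 1 \<le> n\<close> by (intro sum.atLeastLessThan_concat[symmetric]) auto
  also have "\<dots> \<le> 512 * real (card A) ^ n / n + 2 * real (card A) ^ n / n"
    using A M n \<open>M + 1 \<le> n\<close>
    by (intro add_mono sum_card_closed_with_short_border sum_card_closed_with_long_border) auto
  finally show ?thesis by simp
qed

section \<open>Lower bound\<close>

lemma closed_word_if_no_inner_occurrence:
  assumes "u \<noteq> []" and "\<forall>i \<in> {1..<length u + length v}. i \<notin> occurrences u (u @ v @ u)"
  shows "closed_word (u @ v @ u)"
proof -
  have "occurrences u (u @ v @ u) \<subseteq> {0, length u + length v}"
  proof
    fix i assume i: "i \<in> occurrences u (u @ v @ u)"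
    then have "i \<le> length u + length v" by (simp add: occurrences_def)
    moreover have "i \<notin> {1..<length u + length v}" using assms(2) i by blast
    ultimately show "i \<in> {0, length u + length v}" by auto
  qed
  moreover have "{0, length u + length v} \<subseteq> occurrences u (u @ v @ u)"
    by (auto simp: occurrences_def)
  ultimately have "occurrences u (u @ v @ u) = {0, length u + length v}" by (rule subset_antisym)
  then have "occ_count u (u @ v @ u) = 2"
    using assms(1) by (simp add: occ_count_eq_card_occurrences)
  moreover have "is_border u (u @ v @ u)"
    using assms(1) by (auto simp: is_border_def strict_prefix_def strict_suffix_def prefix_def suffix_def)
  ultimately show ?thesis by (auto simp: closed_word_def)
qed

text \<open>Each letter of \<open>u\<close> read at position \<open>i\<close> is either a letter of \<open>v\<close> or another letter
  of \<open>u\<close>, further right when \<open>i < length u\<close> and further left otherwise; so \<open>v\<close> and \<open>i\<close>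
  determine \<open>u\<close> by induction.\<close>
lemma inner_occurrence_determines_border:
  assumes len: "length u' = length u" "length u \<le> length v"
    and i: "0 < i" "i < length u + length v"
    and occ: "i \<in> occurrences u (u @ v @ u)" "i \<in> occurrences u' (u' @ v @ u')"
  shows "u = u'"
proof -
  let ?m = "length u" and ?L = "length v"
  have nth: "x ! j = (if i + j < ?m then x ! (i + j) else if i + j < ?m + ?L then v ! (i + j - ?m)
                      else x ! (i + j - ?m - ?L))"
    if "length x = ?m" "i \<in> occurrences x (x @ v @ x)" "j < ?m" for x j
    using nth_eq_nth_of_occurrence[OF that(2), of j] that by (auto simp: nth_append)
  note nth_u = nth[OF refl occ(1)] and nth_u' = nth[OF len(1) occ(2)]
  have "u ! j = u' ! j" if "j < ?m" for j
  proof (cases "i < ?m")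
    case True
    show ?thesis using that
    proof (induction "?m - j" arbitrary: j rule: less_induct)
      case (less j)
      have "i + j < ?m \<Longrightarrow> u ! (i + j) = u' ! (i + j)" using i less by (intro less.hyps) auto
      then show ?case using nth_u[OF less.prems] nth_u'[OF less.prems] True len less.prems by auto
    qed
  next
    case False
    show ?thesis using that
    proof (induction j rule: less_induct)
      case (less j)
      have "\<not> i + j < ?m + ?L \<Longrightarrow> u ! (i + j - ?m - ?L) = u' ! (i + j - ?m - ?L)"
        using i less by (intro less.IH) auto
      then show ?case using nth_u[OF less.prems] nth_u'[OF less.prems] False by auto
    qed
  qed
  then show ?thesis using len by (intro nth_equalityI) auto
qed

lemma card_pairs_with_inner_occurrence_le:
  assumes "finite A" and "m \<le> L" and "0 < i" and "i < m + L"
  shows "card {(u, v) \<in> words A m \<times> words A L. i \<in> occurrences u (u @ v @ u)} \<le> card A ^ L"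
    (is "card ?B \<le> _")
proof -
  have "inj_on snd ?B"
  proof (rule inj_onI)
    fix p q assume p: "p \<in> ?B" and q: "q \<in> ?B" and "snd p = snd q"
    then obtain u u' v where pq: "p = (u, v)" "q = (u', v)"
      by (cases p, cases q) simp
    have "length u = m" "length u' = m" "length v = L"
      using p q unfolding pq by (simp_all add: words_def)
    moreover have "i \<in> occurrences u (u @ v @ u)" "i \<in> occurrences u' (u' @ v @ u')"
      using p q unfolding pq by simp_all
    ultimately have "u = u'"
      using assms(2-4) by (intro inner_occurrence_determines_border) auto
    then show "p = q" using pq by simp
  qed
  then have "card ?B = card (snd ` ?B)" by (rule card_image[symmetric])
  also have "\<dots> \<le> card (words A L)" using assms(1) by (intro card_mono) auto
  finally show ?thesis using assms(1) by simp
qed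

lemma card_pairs_without_inner_occurrence_le:
  assumes "finite A" and "1 \<le> m"
  shows "card {(u, v) \<in> words A m \<times> words A L. \<forall>i \<in> {1..<m + L}. i \<notin> occurrences u (u @ v @ u)}
           \<le> card (closed_words A (2 * m + L))"
    (is "card ?G \<le> _")
proof -
  have "inj_on (\<lambda>(u, v). u @ v @ u) ?G"
  proof (rule inj_onI)
    fix p q assume p: "p \<in> ?G" and q: "q \<in> ?G" and eq: "(\<lambda>(u, v). u @ v @ u) p = (\<lambda>(u, v). u @ v @ u) q"
    obtain u v where p_eq: "p = (u, v)" by (cases p)
    obtain u' v' where q_eq: "q = (u', v')" by (cases q)
    have "length u = length u'" using p q unfolding p_eq q_eq by (simp add: words_def)
    then show "p = q" using eq unfolding p_eq q_eq by (simp add: append_eq_append_conv)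
  qed
  then have "card ?G = card ((\<lambda>(u, v). u @ v @ u) ` ?G)" by (rule card_image[symmetric])
  also have "\<dots> \<le> card (closed_words A (2 * m + L))"
  proof (rule card_mono)
    show "finite (closed_words A (2 * m + L))" using assms(1) by simp
    show "(\<lambda>(u, v). u @ v @ u) ` ?G \<subseteq> closed_words A (2 * m + L)"
    proof
      fix w assume "w \<in> (\<lambda>(u, v). u @ v @ u) ` ?G"
      then obtain u v where uv: "(u, v) \<in> ?G" and w: "w = u @ v @ u" by auto
      then have len: "length u = m" "length v = L" and set: "set u \<subseteq> A" "set v \<subseteq> A"
        by (simp_all add: words_def)
      have "closed_word (u @ v @ u)"
        using assms(2) len uv by (intro closed_word_if_no_inner_occurrence) auto
      then show "w \<in> closed_words A (2 * m + L)"
        using len set w by (simp add: closed_words_def words_def)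
    qed
  qed
  finally show ?thesis .
qed

lemma card_closed_words_ge:
  assumes A: "finite A" and m: "1 \<le> m" "m \<le> L"
  shows "card A ^ m * card A ^ L \<le> card (closed_words A (2 * m + L)) + (2 * m + L) * card A ^ L"
proof -
  let ?P = "words A m \<times> words A L"
  define B where "B i = {(u, v) \<in> ?P. i \<in> occurrences u (u @ v @ u)}" for i
  define G where "G = {(u, v) \<in> ?P. \<forall>i \<in> {1..<m + L}. i \<notin> occurrences u (u @ v @ u)}"
  have G_le: "card G \<le> card (closed_words A (2 * m + L))"
    unfolding G_def using A m(1) by (rule card_pairs_without_inner_occurrence_le)
  have B_le: "card (B i) \<le> card A ^ L" if "i \<in> {1..<m + L}" for i
    unfolding B_def using A m(2) that by (intro card_pairs_with_inner_occurrence_le) auto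
  have sub: "G \<subseteq> ?P" "B i \<subseteq> ?P" for i by (auto simp: G_def B_def)
  moreover have "finite ?P" using A by simp
  ultimately have fin: "finite G" "finite (B i)" for i by (auto intro: finite_subset)
  have "?P \<subseteq> G \<union> (\<Union>i \<in> {1..<m + L}. B i)" by (auto simp: G_def B_def)
  then have "card ?P \<le> card (G \<union> (\<Union>i \<in> {1..<m + L}. B i))"
    using fin by (intro card_mono) auto
  then have "card A ^ m * card A ^ L \<le> card (G \<union> (\<Union>i \<in> {1..<m + L}. B i))"
    using A by (simp add: card_cartesian_product)
  also have "\<dots> \<le> card G + card (\<Union>i \<in> {1..<m + L}. B i)"
    by (rule card_Un_le)
  also have "\<dots> \<le> card G + (\<Sum>i \<in> {1..<m + L}. card (B i))"
    by (simp add: card_UN_le)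
  also have "\<dots> \<le> card (closed_words A (2 * m + L)) + (\<Sum>i \<in> {1..<m + L}. card A ^ L)"
    using G_le B_le by (intro add_mono sum_mono)
  also have "\<dots> \<le> card (closed_words A (2 * m + L)) + (2 * m + L) * card A ^ L"
    by simp linarith
  finally show ?thesis .
qed

lemma card_closed_words_lower:
  assumes A: "finite A" "card A \<ge> 2" and n: "n \<ge> 22"
  shows "real (card A) ^ n / (4 * card A * n) \<le> card (closed_words A n)"
proof -
  let ?K = "real (card A)" and ?C = "real (card (closed_words A n))"
  obtain m where m: "card A ^ m < 2 * n" "2 * n \<le> card A ^ (m + 1)"
    using ex_power_ivl2[OF A(2), of "2 * n"] n by auto
  have "3 * (m + 1) \<le> n"
  proof (cases "7 \<le> m")
    case True
    have "2 ^ m \<le> card A ^ m" using A by (simp add: power_mono)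
    then have "12 * m < 2 * n"
      using twelve_mult_le_two_power[OF True] m(1) by (metis le_less_trans order_trans)
    then show ?thesis using True by presburger
  next
    case False
    then show ?thesis using n by presburger
  qed
  define L where "L = n - 2 * (m + 1)"
  have n_eq: "n = 2 * (m + 1) + L" and "m + 1 \<le> L" using \<open>3 * (m + 1) \<le> n\<close> by (simp_all add: L_def)
  have "card A ^ (m + 1) * card A ^ L \<le> card (closed_words A n) + n * card A ^ L"
    unfolding n_eq by (rule card_closed_words_ge[OF A(1) _ \<open>m + 1 \<le> L\<close>]) simp
  then have "?K ^ (m + 1) * ?K ^ L \<le> ?C + n * ?K ^ L"
    by (metis of_nat_add of_nat_le_iff of_nat_mult of_nat_power)
  moreover have "2 * n * ?K ^ L \<le> ?K ^ (m + 1) * ?K ^ L"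
    using m(2) by (intro mult_right_mono) (simp_all add: of_nat_le_iff flip: of_nat_power of_nat_mult)
  ultimately have half: "?K ^ (m + 1) * ?K ^ L \<le> 2 * ?C" by linarith
  have "n = (m + 1) + m + 1 + L" using n_eq by simp
  then have "?K ^ n = ?K ^ (m + 1) * ?K ^ m * ?K ^ 1 * ?K ^ L" by (simp only: power_add)
  also have "\<dots> = ?K * ?K ^ m * (?K ^ (m + 1) * ?K ^ L)" by (simp add: mult_ac)
  also have "\<dots> \<le> ?K * (2 * n) * (2 * ?C)"
  proof (rule mult_mono)
    have "?K ^ m \<le> 2 * n"
      using m(1) by (metis less_imp_le of_nat_le_iff of_nat_mult of_nat_numeral of_nat_power)
    then show "?K * ?K ^ m \<le> ?K * (2 * n)" by (simp add: mult_left_mono)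
  qed (rule half | simp)+
  finally have "?K ^ n \<le> 4 * ?K * n * ?C" by (simp add: mult_ac)
  moreover have "0 < 4 * ?K * n" using A n by simp
  ultimately show ?thesis by (simp add: divide_le_eq mult_ac)
qed

theorem theorem1:
  fixes k :: nat
  assumes "k \<ge> 2"
  shows "(\<exists>(N::real) (c::real). N > 0 \<and> c > 0 \<and> (\<forall>n::nat. real n > N \<longrightarrow>
            real (closed_count k n) \<ge> c * real k ^ n / real n))
       \<and> (\<exists>(N'::real) (c'::real). N' > 0 \<and> c' > 0 \<and> (\<forall>n::nat. real n > N' \<longrightarrow>
            real (closed_count k n) \<le> c' * real k ^ n / real n))"
proof
  have A: "finite {..<k}" "card {..<k} \<ge> 2" using assms by simp_all
  show "\<exists>(N::real) (c::real). N > 0 \<and> c > 0 \<and> (\<forall>n::nat. real n > N \<longrightarrow>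
          real (closed_count k n) \<ge> c * real k ^ n / real n)"
  proof (intro exI conjI allI impI)
    fix n :: nat assume "real n > 21"
    then show "1 / (4 * real k) * real k ^ n / real n \<le> real (closed_count k n)"
      using card_closed_words_lower[OF A, of n]
      by (simp add: closed_count_eq_card_closed_words mult.assoc)
  qed (use assms in simp_all)
  show "\<exists>(N'::real) (c'::real). N' > 0 \<and> c' > 0 \<and> (\<forall>n::nat. real n > N' \<longrightarrow>
          real (closed_count k n) \<le> c' * real k ^ n / real n)"
  proof (intro exI conjI allI impI)
    fix n :: nat assume "real n > 99"
    then show "real (closed_count k n) \<le> 514 * real k ^ n / real n"
      using card_closed_words_upper[OF A, of n] by (simp add: closed_count_eq_card_closed_words)
  qed simp_all
qed

end
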